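(* Let $\lambda>0$ and let $U$ be a non-central chi-squared random variable with four degrees of freedom and non-centrality parameter $\lambda$. Then for every $x>0$, \begin{align*} E\left( \frac{\lambda}{U} \right) &= 1-\exp (-\lambda /2),\\ E\left( \frac{\lambda}{U} 1_{U< x}\right) &= \chi^2_{0,\lambda }(x) - \exp (-\lambda /2),\\ E\left( \frac{\lambda}{U} 1_{U\ge x}\right) &= 1-\chi^2_{0,\lambda }(x). \end{align*}
   Context: For $\nu\ge 0$ and $\lambda>0$, $\chi^2_{\nu,\lambda}$ denotes the cumulative distribution function of a non-central chi-squared random variable with $\nu$ degrees of freedom and non-centrality parameter $\lambda$, i.e. of a chi-squared random variable $X_N$ with a random number $N=\nu+2P$ of degrees of freedom, where $P$ is Poisson distributed with mean $\lambda/2$ (with the convention that a chi-squared variable with $0$ degrees of freedom equals $0$). In particular $\chi^2_{0,\lambda}$ is the distribution function of this mixture with $\nu=0$, which has an atom of mass $\exp(-\lambda/2)$ at $0$. *)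

theory Defs
  imports "HOL-Probability.Probability"
begin

definition chi2_density :: "real \<Rightarrow> real \<Rightarrow> real" where
  "chi2_density k x =
     (if x > 0 then x powr (k / 2 - 1) * exp (- x / 2) / (2 powr (k / 2) * Gamma (k / 2)) else 0)"

definition chi2_measure :: "real \<Rightarrow> real measure" where
  "chi2_measure k = (if k = 0 then return borel 0 else density lborel (\<lambda>x. ennreal (chi2_density k x)))"

definition ncchi2_measure :: "real \<Rightarrow> real \<Rightarrow> real measure" where
  "ncchi2_measure nu lam =
     measure_pmf (poisson_pmf (lam / 2)) \<bind> (\<lambda>j. chi2_measure (nu + 2 * real j))"

definition ncchi2_cdf :: "real \<Rightarrow> real \<Rightarrow> real \<Rightarrow> real" where
  "ncchi2_cdf nu lam x = measure (ncchi2_measure nu lam) {..x}"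

end

theory Submission
  imports Defs
begin

text \<open>The law of \<open>U\<close> is the Poisson(\<open>\<lambda>/2\<close>) mixture over \<open>j\<close> of the chi-squared laws
  with \<open>2j + 4\<close> degrees of freedom, whose densities are Erlang densities. Multiplying the
  density with \<open>2j + 4\<close> degrees by \<open>\<lambda>/u\<close> gives \<open>\<lambda>/(2j + 2)\<close> times the density with
  \<open>2j + 2\<close> degrees, and the factor \<open>\<lambda>/(2j + 2)\<close> turns the Poisson weight of \<open>j\<close> into that
  of \<open>j + 1\<close>. Hence \<open>E(\<lambda>/U; U \<in> A)\<close> is the non-central law with 0 degrees of freedom
  deprived of its \<open>j = 0\<close> component, the atom of mass \<open>exp(-\<lambda>/2)\<close> at \<open>0\<close>; that law has
  no other atoms.\<close>

lemma chi2_density_even: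
  assumes "x \<noteq> 0"
  shows "chi2_density (2 * real (Suc n)) x = erlang_density n (1/2) x"
proof (cases "x > 0")
  case True
  have half: "(2 + 2 * real n) / 2 = 1 + real n"
    by simp
  have "chi2_density (2 * real (Suc n)) x = x ^ n * exp (- x / 2) / (2 ^ Suc n * fact n)"
    using True by (simp add: chi2_density_def half powr_add powr_realpow Gamma_fact)
  also have "\<dots> = erlang_density n (1/2) x"
    using True by (simp add: erlang_density_def power_one_over field_simps)
  finally show ?thesis .
next
  case False
  with assms show ?thesis by (simp add: chi2_density_def erlang_density_def)
qed

lemma borel_measurable_chi2_density [measurable]: "chi2_density k \<in> borel_measurable borel"
  unfolding chi2_density_def by measurable

lemma chi2_measure_even:
  "chi2_measure (2 * real (Suc n)) = density lborel (\<lambda>x. ennreal (erlang_density n (1/2) x))"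
proof -
  have "AE x in lborel. ennreal (chi2_density (2 * real (Suc n)) x) = ennreal (erlang_density n (1/2) x)"
    using AE_lborel_singleton[of 0] by eventually_elim (metis chi2_density_even)
  then show ?thesis
    unfolding chi2_measure_def by (auto intro: density_cong)
qed

lemma sets_chi2_measure [simp, measurable_cong]: "sets (chi2_measure k) = sets borel"
  by (simp add: chi2_measure_def)

lemma prob_space_chi2_measure_even: "prob_space (chi2_measure (2 * real m))"
proof (cases m)
  case 0
  then show ?thesis by (simp add: chi2_measure_def prob_space_return)
next
  case (Suc n)
  then show ?thesis
    using prob_space_erlang_density[of "1/2" n] by (simp only: chi2_measure_even)
qed

lemma measurable_chi2_measure_even:
  "(\<lambda>j. chi2_measure (2 * real (f j))) \<in> measurable (measure_pmf P) (subprob_algebra borel)"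
  using prob_space_chi2_measure_even
  by (auto simp: space_subprob_algebra intro: prob_space_imp_subprob_space)

lemma emeasure_chi2_measure_even_singleton:
  "emeasure (chi2_measure (2 * real (Suc n))) {x} = 0"
proof -
  have "(\<integral>\<^sup>+y. ennreal (erlang_density n (1/2) y) * indicator {x} y \<partial>lborel) = 0"
    using AE_lborel_singleton[of x]
    by (intro nn_integral_0_iff_AE[THEN iffD2]) (auto elim!: eventually_mono)
  then show ?thesis
    unfolding chi2_measure_even by (simp add: emeasure_density)
qed

lemma nn_integral_chi2_measure_reciprocal:
  assumes "c \<ge> 0" and [measurable]: "A \<in> sets borel"
  shows "(\<integral>\<^sup>+u. ennreal (c / u * indicator A u) \<partial>chi2_measure (2 * real (Suc (Suc n))))
       = ennreal (c / (2 * real (Suc n))) * emeasure (chi2_measure (2 * real (Suc n))) A"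
proof -
  have "(\<integral>\<^sup>+u. ennreal (c / u * indicator A u) \<partial>chi2_measure (2 * real (Suc (Suc n))))
      = (\<integral>\<^sup>+u. ennreal (erlang_density (Suc n) (1/2) u) * ennreal (c / u * indicator A u) \<partial>lborel)"
    unfolding chi2_measure_even by (rule nn_integral_density) auto
  also have "\<dots> = (\<integral>\<^sup>+u. ennreal (c / (2 * real (Suc n)))
                     * (ennreal (erlang_density n (1/2) u) * indicator A u) \<partial>lborel)"
  proof (rule nn_integral_cong_AE)
    show "AE u in lborel. ennreal (erlang_density (Suc n) (1/2) u) * ennreal (c / u * indicator A u)
        = ennreal (c / (2 * real (Suc n))) * (ennreal (erlang_density n (1/2) u) * indicator A u)"
      using AE_lborel_singleton[of 0]
    proof eventually_elim
      case (elim u)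
      have "erlang_density (Suc n) (1/2) u * (c / u) = c / (2 * real (Suc n)) * erlang_density n (1/2) u"
        using elim by (auto simp del: of_nat_Suc simp: erlang_density_def mult_ac)
      then show ?case
        using assms(1) by (auto simp: ennreal_mult'[symmetric] ennreal_mult[symmetric] split: split_indicator)
    qed
  qed
  also have "\<dots> = ennreal (c / (2 * real (Suc n))) * emeasure (chi2_measure (2 * real (Suc n))) A"
    unfolding chi2_measure_even by (simp add: emeasure_density nn_integral_cmult)
  finally show ?thesis .
qed

lemma pmf_poisson_Suc:
  assumes "r > 0"
  shows "pmf (poisson_pmf r) (Suc k) = r / real (Suc k) * pmf (poisson_pmf r) k"
  using assms by (simp add: field_simps)

lemma ncchi2_measure_even:
  "ncchi2_measure (2 * real m) lam
     = measure_pmf (poisson_pmf (lam / 2)) \<bind> (\<lambda>j. chi2_measure (2 * real (m + j)))"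
  by (simp add: ncchi2_measure_def distrib_left)

lemma sets_ncchi2_measure_even [simp, measurable_cong]:
  "sets (ncchi2_measure (2 * real m) lam) = sets borel"
  unfolding ncchi2_measure_even by (rule sets_bind) auto

lemma space_ncchi2_measure_even [simp]: "space (ncchi2_measure (2 * real m) lam) = UNIV"
  using sets_eq_imp_space_eq[OF sets_ncchi2_measure_even] by simp

lemma prob_space_ncchi2_measure_even: "prob_space (ncchi2_measure (2 * real m) lam)"
  unfolding ncchi2_measure_even
  by (rule prob_space.prob_space_bind[OF prob_space_measure_pmf _ measurable_chi2_measure_even])
    (simp del: of_nat_add add: prob_space_chi2_measure_even)

lemma nn_integral_ncchi2_measure_even:
  assumes "f \<in> borel_measurable borel"
  shows "(\<integral>\<^sup>+u. f u \<partial>ncchi2_measure (2 * real m) lam)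
       = (\<Sum>j. ennreal (pmf (poisson_pmf (lam / 2)) j) * \<integral>\<^sup>+u. f u \<partial>chi2_measure (2 * real (m + j)))"
  unfolding ncchi2_measure_even
  by (simp only: nn_integral_bind[OF assms measurable_chi2_measure_even]
      nn_integral_measure_pmf nn_integral_count_space_nat)

lemma emeasure_ncchi2_measure_even:
  assumes "B \<in> sets borel"
  shows "emeasure (ncchi2_measure (2 * real m) lam) B
       = (\<Sum>j. ennreal (pmf (poisson_pmf (lam / 2)) j) * emeasure (chi2_measure (2 * real (m + j))) B)"
  using nn_integral_ncchi2_measure_even[of "indicator B" m lam] assms
  by (simp add: nn_integral_indicator del: of_nat_add)

lemma nn_integral_ncchi2_measure_4_reciprocal:
  assumes "lam > 0" and [measurable]: "A \<in> sets borel"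
  shows "(\<integral>\<^sup>+u. ennreal (lam / u * indicator A u) \<partial>ncchi2_measure 4 lam)
       = emeasure (ncchi2_measure 0 lam) (A - {0})"
proof -
  let ?p = "pmf (poisson_pmf (lam / 2))"
  have "(\<integral>\<^sup>+u. ennreal (lam / u * indicator A u) \<partial>ncchi2_measure (2 * real (2::nat)) lam)
      = (\<Sum>j. ennreal (?p j) * \<integral>\<^sup>+u. ennreal (lam / u * indicator A u) \<partial>chi2_measure (2 * real (Suc (Suc j))))"
    using nn_integral_ncchi2_measure_even[of "\<lambda>u. ennreal (lam / u * indicator A u)" 2 lam]
    by simp
  also have "\<dots> = (\<Sum>j. ennreal (?p (Suc j)) * emeasure (chi2_measure (2 * real (Suc j))) (A - {0}))"
  proof (rule suminf_cong)
    fix j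
    have "{0} \<in> null_sets (chi2_measure (2 * real (Suc j)))"
      by (rule null_setsI[OF emeasure_chi2_measure_even_singleton]) simp
    then have null: "emeasure (chi2_measure (2 * real (Suc j))) (A - {0})
        = emeasure (chi2_measure (2 * real (Suc j))) A"
      by (simp add: emeasure_Diff_null_set)
    have weight: "ennreal (?p j) * ennreal (lam / (2 * real (Suc j))) = ennreal (?p (Suc j))"
      using assms(1) pmf_poisson_Suc[of "lam / 2" j] by (simp add: ennreal_mult'[symmetric] mult.commute)
    have "(\<integral>\<^sup>+u. ennreal (lam / u * indicator A u) \<partial>chi2_measure (2 * real (Suc (Suc j))))
        = ennreal (lam / (2 * real (Suc j))) * emeasure (chi2_measure (2 * real (Suc j))) A"
      using assms by (intro nn_integral_chi2_measure_reciprocal) auto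
    then show "ennreal (?p j) * \<integral>\<^sup>+u. ennreal (lam / u * indicator A u) \<partial>chi2_measure (2 * real (Suc (Suc j)))
        = ennreal (?p (Suc j)) * emeasure (chi2_measure (2 * real (Suc j))) (A - {0})"
      by (simp only: null weight mult.assoc[symmetric])
  qed
  \<comment> \<open>the new term \<open>j = 0\<close> vanishes: \<open>chi2_measure 0\<close> is the point mass at \<open>0\<close>\<close>
  also have "\<dots> = (\<Sum>j. ennreal (?p j) * emeasure (chi2_measure (2 * real j)) (A - {0}))"
    using suminf_offset[of "\<lambda>j. ennreal (?p j) * emeasure (chi2_measure (2 * real j)) (A - {0})" 1]
    by (simp add: chi2_measure_def)
  also have "\<dots> = emeasure (ncchi2_measure 0 lam) (A - {0})"
    using emeasure_ncchi2_measure_even[of "A - {0}" 0 lam] by simp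
  finally show ?thesis
    by simp
qed

lemma measure_ncchi2_measure_0_singleton:
  assumes "lam > 0"
  shows "measure (ncchi2_measure 0 lam) {x} = (if x = 0 then exp (- lam / 2) else 0)"
proof -
  have "emeasure (ncchi2_measure 0 lam) {x}
      = (\<Sum>j. ennreal (pmf (poisson_pmf (lam / 2)) j) * emeasure (chi2_measure (2 * real j)) {x})"
    using emeasure_ncchi2_measure_even[of "{x}" 0 lam] by simp
  also have "\<dots> = ennreal (pmf (poisson_pmf (lam / 2)) 0) * emeasure (chi2_measure 0) {x}"
  proof (subst suminf_finite[of "{0}"])
    show "ennreal (pmf (poisson_pmf (lam / 2)) j) * emeasure (chi2_measure (2 * real j)) {x} = 0"
      if "j \<notin> {0}" for j
      using that emeasure_chi2_measure_even_singleton[of "j - 1" x] by (cases j) auto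
  qed auto
  finally show ?thesis
    using assms by (simp add: chi2_measure_def measure_def)
qed

lemma measure_ncchi2_measure_0_lessThan:
  assumes "lam > 0" and "x \<noteq> 0"
  shows "measure (ncchi2_measure 0 lam) {..<x} = ncchi2_cdf 0 lam x"
proof -
  interpret N: prob_space "ncchi2_measure 0 lam"
    using prob_space_ncchi2_measure_even[of 0 lam] by simp
  have "measure (ncchi2_measure 0 lam) {x} = 0"
    using assms by (simp add: measure_ncchi2_measure_0_singleton)
  moreover have "{..<x} = {..x} - {x}"
    by auto
  ultimately show ?thesis
    using sets_ncchi2_measure_even[of 0 lam] by (simp add: N.finite_measure_Diff ncchi2_cdf_def)
qed

lemma nn_integral_reciprocal_ncchi2_measure_4_distributed:
  assumes [measurable]: "U \<in> borel_measurable M"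
    and "distr M borel U = ncchi2_measure 4 lam" and "lam > 0" and [measurable]: "A \<in> sets borel"
  shows "(\<integral>\<^sup>+\<omega>. ennreal (lam / U \<omega> * indicator A (U \<omega>)) \<partial>M)
       = ennreal (measure (ncchi2_measure 0 lam) (A - {0}))"
proof -
  interpret N: prob_space "ncchi2_measure 0 lam"
    using prob_space_ncchi2_measure_even[of 0 lam] by simp
  have "(\<integral>\<^sup>+\<omega>. ennreal (lam / U \<omega> * indicator A (U \<omega>)) \<partial>M)
      = (\<integral>\<^sup>+u. ennreal (lam / u * indicator A u) \<partial>distr M borel U)"
    by (subst nn_integral_distr) auto
  then show ?thesis
    by (simp only: assms(2) nn_integral_ncchi2_measure_4_reciprocal[OF assms(3,4)] N.emeasure_eq_measure)
qed

theorem lemma5p1: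
  fixes M :: "'a measure" and U :: "'a \<Rightarrow> real" and lam :: real
  assumes "prob_space M"
    and "U \<in> borel_measurable M"
    and "distr M borel U = ncchi2_measure 4 lam"
    and "lam > 0"
  shows "(\<integral>\<^sup>+\<omega>. ennreal (lam / U \<omega>) \<partial>M) = ennreal (1 - exp (- lam / 2)) \<and>
         (\<forall>x>0.
           (\<integral>\<^sup>+\<omega>. ennreal (lam / U \<omega> * indicator {..<x} (U \<omega>)) \<partial>M)
             = ennreal (ncchi2_cdf 0 lam x - exp (- lam / 2)) \<and>
           (\<integral>\<^sup>+\<omega>. ennreal (lam / U \<omega> * indicator {x..} (U \<omega>)) \<partial>M)
             = ennreal (1 - ncchi2_cdf 0 lam x))"
proof -
  interpret N: prob_space "ncchi2_measure 0 lam"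
    using prob_space_ncchi2_measure_even[of 0 lam] by simp
  have sets_N [simp]: "sets (ncchi2_measure 0 lam) = sets borel"
    and space_N [simp]: "space (ncchi2_measure 0 lam) = UNIV"
    using sets_ncchi2_measure_even[of 0 lam] space_ncchi2_measure_even[of 0 lam] by simp_all
  have atom_0: "N.prob {0} = exp (- lam / 2)"
    using assms(4) by (simp add: measure_ncchi2_measure_0_singleton)
  note E = nn_integral_reciprocal_ncchi2_measure_4_distributed[OF assms(2-4)]
  have "N.prob (UNIV - {0}) = 1 - exp (- lam / 2)"
    using N.prob_compl[of "{0}"] atom_0 by simp
  moreover have "N.prob ({..<x} - {0}) = ncchi2_cdf 0 lam x - exp (- lam / 2)"
    and "N.prob ({x..} - {0}) = 1 - ncchi2_cdf 0 lam x" if "x > 0" for x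
  proof -
    show "N.prob ({..<x} - {0}) = ncchi2_cdf 0 lam x - exp (- lam / 2)"
      using that assms(4) atom_0 by (simp add: N.finite_measure_Diff measure_ncchi2_measure_0_lessThan)
    have "{x..} - {0} = UNIV - {..<x}"
      using that by auto
    then show "N.prob ({x..} - {0}) = 1 - ncchi2_cdf 0 lam x"
      using that assms(4) N.prob_compl[of "{..<x}"] by (simp add: measure_ncchi2_measure_0_lessThan)
  qed
  ultimately show ?thesis
    using E[of UNIV] E[of "{..<_}"] E[of "{_..}"] by simp
qed

end
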